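(* Let $b\ge2$ be an integer and let $w=d_1\dots d_p$ be a fixed block of $b$-ary digits with $p\ge1$. Let $u=d_1\dots d_{p-1}$ and $v=d_2\dots d_p$. For every $k\ge1$, the following identity of formal Laurent series in $t$ holds: $$Z_w(k)=t^{2-p}\bigl(t^{2-p}Z_w(v,0,u)\bigr)^{k-1}Z_w(v,0)^2.$$
   Context: Strings are finite sequences over $\{0,\dots,b-1\}$, including the empty string $\epsilon$. $k_w(X)$ is the number of possibly overlapping occurrences of $w$ in $X$. $Z_w(k)=\sum_l N_w(k,l)t^l$, where $N_w(k,l)$ is the number of strings of length $l$ with $k_w(X)=k$. For strings $x,y$, $Z_w(x,0,y)=\sum_lc_lt^l$, where $c_l$ is the number of strings of length $l$ with $k_w=0$, prefix $x$ and suffix $y$. Also $Z_w(x,0)=Z_w(x,0,\epsilon)$. When $p=1$, $u=v=\epsilon$. *)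

theory Defs
  imports "HOL-Computational_Algebra.Formal_Laurent_Series" "HOL-Library.Sublist"
begin

definition strings :: "nat \<Rightarrow> nat \<Rightarrow> nat list set" where
  "strings b l = {X. length X = l \<and> set X \<subseteq> {..<b}}"

definition occ :: "nat list \<Rightarrow> nat list \<Rightarrow> nat" where
  "occ w X = card {i. i + length w \<le> length X \<and> take (length w) (drop i X) = w}"

definition Zk :: "nat \<Rightarrow> nat list \<Rightarrow> nat \<Rightarrow> int fps" where
  "Zk b w k = Abs_fps (\<lambda>l. int (card {X \<in> strings b l. occ w X = k}))"

definition Z0 :: "nat \<Rightarrow> nat list \<Rightarrow> nat list \<Rightarrow> nat list \<Rightarrow> int fps" where
  "Z0 b w x y = Abs_fps (\<lambda>l. int (card {X \<in> strings b l. occ w X = 0 \<and> prefix x X \<and> suffix y X}))"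

end

theory Submission
  imports Defs
begin

text \<open>Cut a word with k \<ge> 1 occurrences of w right after each occurrence. Writing
  v = tl w for the overlap of consecutive occurrences, this factors the word uniquely as
  P M_1 ... M_(k-1) B, where P contains w only at its end, each v M_i contains w only at its end,
  and v B avoids w. Prefixing v turns the generating functions of the pieces M_i and B into
  t Z_w(v,0,u) (as v M_i = Z d_p with Z avoiding w) and Z_w(v,0), up to the factor t^(p-1).
  The words containing w only at their end are equinumerous with those containing w only at
  their start, which are d_1 followed by a w-free word with prefix v; so P contributes t Z_w(v,0).\<close>

section \<open>Occurrences of a pattern\<close>

definition occs :: "'a list \<Rightarrow> 'a list \<Rightarrow> nat set" where
  "occs w X = {i. i + length w \<le> length X \<and> take (length w) (drop i X) = w}"

lemma occ_eq_card_occs: "occ w X = card (occs w X)"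
  by (simp add: occ_def occs_def)

lemma finite_occs [simp]: "finite (occs w X)"
  by (rule finite_subset[of _ "{..length X}"]) (auto simp: occs_def)

lemma occs_bound: "i \<in> occs w X \<Longrightarrow> i + length w \<le> length X"
  by (simp add: occs_def)

lemma occs_take: "i \<in> occs w (take m X) \<longleftrightarrow> i \<in> occs w X \<and> i + length w \<le> m"
  by (auto simp: occs_def take_drop min_def)

lemma occs_drop:
  assumes "w \<noteq> []"
  shows "i \<in> occs w (drop m X) \<longleftrightarrow> i + m \<in> occs w X"
  using assms by (auto simp: occs_def add.commute) (use take_all in fastforce)

lemma zero_in_occs_iff: "0 \<in> occs w X \<longleftrightarrow> prefix w X"
  by (auto simp: occs_def prefix_def) (metis append_take_drop_id)

lemma last_start_in_occs_iff:
  assumes "length w \<le> length X"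
  shows "length X - length w \<in> occs w X \<longleftrightarrow> suffix w X"
  using assms by (auto simp: occs_def suffix_def) (metis append_take_drop_id length_drop)

lemma occs_Nil: "w \<noteq> [] \<Longrightarrow> occs w [] = {}"
  by (auto simp: occs_def)

lemma occs_Cons:
  assumes "w \<noteq> []"
  shows "occs w (c # Z) = {i. i = 0 \<and> prefix w (c # Z)} \<union> Suc ` occs w Z"
proof -
  have Suc: "Suc j \<in> occs w (c # Z) \<longleftrightarrow> j \<in> occs w Z" for j
    using occs_drop[OF assms, of j 1 "c # Z"] by simp
  show ?thesis
  proof (rule set_eqI)
    fix i show "i \<in> occs w (c # Z) \<longleftrightarrow> i \<in> {i. i = 0 \<and> prefix w (c # Z)} \<union> Suc ` occs w Z"
      using zero_in_occs_iff[of w "c # Z"] Suc by (cases i) auto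
  qed
qed

lemma occs_snoc:
  "occs w (Z @ [c]) = occs w Z \<union> {i. i + length w = Suc (length Z) \<and> suffix w (Z @ [c])}"
proof -
  have "i \<in> occs w Z \<longleftrightarrow> i \<in> occs w (Z @ [c]) \<and> i + length w \<le> length Z" for i
    using occs_take[of i w "length Z" "Z @ [c]"] by simp
  moreover have "i \<in> occs w (Z @ [c]) \<longleftrightarrow> suffix w (Z @ [c])"
    if "i + length w = Suc (length Z)" for i
  proof -
    have "i = length (Z @ [c]) - length w" "length w \<le> length (Z @ [c])" using that by auto
    then show ?thesis using last_start_in_occs_iff by blast
  qed
  ultimately show ?thesis
    using occs_bound[of _ w "Z @ [c]"] by (auto simp: le_Suc_eq)
qed

lemma occs_append_of_suffix:
  assumes "suffix w P" "w \<noteq> []"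
  shows "occs w (P @ Y) = occs w P \<union> (\<lambda>i. i + (length P - length w + 1)) ` occs w (tl w @ Y)"
    (is "_ = _ \<union> ?shift ` _")
proof -
  let ?j = "length P - length w + 1"
  obtain A where P: "P = A @ w" using assms(1) by (auto simp: suffix_def)
  have take: "take (length P) (P @ Y) = P" by simp
  have drop: "drop ?j (P @ Y) = tl w @ Y" using P assms(2) by (cases w) auto
  have "i \<in> occs w (P @ Y) \<longleftrightarrow> i \<in> occs w P \<or> i \<in> ?shift ` occs w (tl w @ Y)" for i
  proof (cases "i < ?j")
    case True
    then show ?thesis
      using occs_take[of i w "length P" "P @ Y"] take P by auto
  next
    case False
    then have "i \<notin> occs w P" using occs_bound[of i w P] P by auto
    moreover have "i \<in> occs w (P @ Y) \<longleftrightarrow> i - ?j \<in> occs w (tl w @ Y)"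
      using occs_drop[OF assms(2), of "i - ?j" ?j "P @ Y"] drop False by simp
    ultimately show ?thesis
      using False by (auto simp: image_iff intro!: bexI[of _ "i - ?j"])
  qed
  then show ?thesis by blast
qed

lemma occ_append_of_suffix:
  assumes "suffix w P" "w \<noteq> []"
  shows "occ w (P @ Y) = occ w P + occ w (tl w @ Y)"
proof -
  let ?shift = "\<lambda>i. i + (length P - length w + 1)"
  have "occs w P \<inter> ?shift ` occs w (tl w @ Y) = {}"
    using occs_bound[of _ w P] suffix_length_le[OF assms(1)] by fastforce
  moreover have "card (?shift ` occs w (tl w @ Y)) = card (occs w (tl w @ Y))"
    by (rule card_image) (simp add: inj_on_def)
  ultimately show ?thesis
    by (simp add: occ_eq_card_occs occs_append_of_suffix[OF assms] card_Un_disjoint)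
qed

lemma occ_snoc_of_occ_0:
  assumes "occ w Z = 0"
  shows "occ w (Z @ [c]) = (if suffix w (Z @ [c]) then 1 else 0)"
proof -
  have "occs w (Z @ [c]) = {i. i + length w = Suc (length Z) \<and> suffix w (Z @ [c])}"
    using assms occs_snoc[of w Z c] by (simp add: occ_eq_card_occs)
  moreover have "length w \<le> Suc (length Z)" if "suffix w (Z @ [c])"
    using suffix_length_le[OF that] by simp
  ultimately have "occs w (Z @ [c]) = (if suffix w (Z @ [c]) then {Suc (length Z) - length w} else {})"
    by auto
  then show ?thesis by (simp add: occ_eq_card_occs)
qed

lemma occ_Cons_of_occ_0:
  assumes "w \<noteq> []" "occ w Z = 0"
  shows "occ w (c # Z) = (if prefix w (c # Z) then 1 else 0)"
proof -
  have "occs w (c # Z) = (if prefix w (c # Z) then {0} else {})"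
    using assms occs_Cons[of w c Z] by (auto simp: occ_eq_card_occs)
  then show ?thesis by (simp add: occ_eq_card_occs)
qed

lemma occ_butlast_eq_0:
  assumes "w \<noteq> []" "occ w X = 0 \<or> occ w X = 1 \<and> suffix w X"
  shows "occ w (butlast X) = 0"
proof (cases "X = []")
  case False
  then have X: "X = butlast X @ [last X]" by simp
  have "occs w (butlast X) \<subseteq> occs w X"
    using occs_snoc[of w "butlast X" "last X"] X by auto
  moreover have "length X - length w \<notin> occs w (butlast X)"
  proof
    assume "length X - length w \<in> occs w (butlast X)"
    then have "length X - length w + length w \<le> length X - 1"
      by (metis length_butlast occs_bound)
    then show False
      using assms(1) False length_greater_0_conv[of X] length_greater_0_conv[of w] by linarith
  qed
  moreover have "length X - length w \<in> occs w X" if "suffix w X"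
    using last_start_in_occs_iff[OF suffix_length_le[OF that]] that by simp
  ultimately show ?thesis
    using assms(2) by (auto simp: occ_eq_card_occs card_1_singleton_iff)
qed (simp add: occ_eq_card_occs occs_Nil assms(1))

lemma occ_tl_eq_0:
  assumes "w \<noteq> []" "occ w X = 0 \<or> occ w X = 1 \<and> prefix w X"
  shows "occ w (tl X) = 0"
proof (cases X)
  case (Cons c Z)
  have "Suc ` occs w Z \<subseteq> occs w X" "0 \<notin> Suc ` occs w Z"
    using occs_Cons[OF assms(1), of c Z] Cons by auto
  moreover have "0 \<in> occs w X" if "prefix w X"
    using that zero_in_occs_iff by blast
  ultimately have "occs w Z = {}"
    using assms(2) by (auto simp: occ_eq_card_occs card_1_singleton_iff)
  then show ?thesis using Cons by (simp add: occ_eq_card_occs)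
qed (simp add: occ_eq_card_occs occs_Nil assms(1))

lemma occ_suffix_factor_unique:
  assumes "w \<noteq> []" "suffix w P1" "suffix w P2" "occ w P1 = occ w P2" "P1 @ Y1 = P2 @ Y2"
  shows "P1 = P2"
proof -
  have "\<not> length P < length Q"
    if "suffix w P" "suffix w Q" "occ w P = occ w Q" "P @ Y = Q @ Z" for P Q Y Z
  proof
    assume lt: "length P < length Q"
    then have "P = take (length P) Q"
      using \<open>P @ Y = Q @ Z\<close> by (metis append_eq_append_conv_if less_imp_le_nat)
    then have "occs w P \<subseteq> occs w Q"
      using occs_take[of _ w "length P" Q] by auto
    moreover have "length Q - length w \<in> occs w Q - occs w P"
      using last_start_in_occs_iff[OF suffix_length_le] \<open>suffix w Q\<close> occs_bound[of _ w P] lt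
      by fastforce
    ultimately have "card (occs w P) < card (occs w Q)"
      by (intro psubset_card_mono) auto
    then show False using \<open>occ w P = occ w Q\<close> by (simp add: occ_eq_card_occs)
  qed
  then have "length P1 = length P2"
    using assms(2-5) by (metis linorder_neqE_nat)
  then show ?thesis using assms(5) by (simp add: append_eq_append_conv)
qed

section \<open>Generating functions of languages\<close>

definition conc :: "'a list set \<Rightarrow> 'a list set \<Rightarrow> 'a list set" where
  "conc S T = (\<lambda>(P, Y). P @ Y) ` (S \<times> T)"

lemma append_in_conc: "P \<in> S \<Longrightarrow> Y \<in> T \<Longrightarrow> P @ Y \<in> conc S T"
  by (auto simp: conc_def)

lemma conc_singleton: "conc {xs} T = (\<lambda>Y. xs @ Y) ` T"
  by (auto simp: conc_def)

definition lang_gf :: "'a list set \<Rightarrow> int fps" where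
  "lang_gf S = Abs_fps (\<lambda>n. int (card {X \<in> S. length X = n}))"

lemma lang_gf_nth: "lang_gf S $ n = int (card {X \<in> S. length X = n})"
  by (simp add: lang_gf_def)

lemma finite_lists_length_in:
  "finite A \<Longrightarrow> S \<subseteq> lists A \<Longrightarrow> finite {X \<in> S. length X = n}"
  by (rule finite_subset[OF _ finite_lists_length_eq[of A n]]) auto

lemma lang_gf_conc:
  assumes "finite A" "S \<subseteq> lists A" "T \<subseteq> lists A"
    and unambiguous: "\<And>P P' Y Y'. P \<in> S \<Longrightarrow> P' \<in> S \<Longrightarrow> Y \<in> T \<Longrightarrow> Y' \<in> T \<Longrightarrow>
      P @ Y = P' @ Y' \<Longrightarrow> P = P'"
  shows "lang_gf (conc S T) = lang_gf S * lang_gf T"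
proof (rule fps_ext)
  fix n
  let ?S = "\<lambda>i. {X \<in> S. length X = i}" and ?T = "\<lambda>i. {Y \<in> T. length Y = i}"
  let ?U = "\<Union>i\<in>{0..n}. ?S i \<times> ?T (n - i)"
  have finite: "finite (?S i \<times> ?T (n - i))" for i
    using finite_lists_length_in[OF assms(1,2)] finite_lists_length_in[OF assms(1,3)] by blast
  have inj: "inj_on (\<lambda>(P, Y). P @ Y) ?U"
  proof (rule inj_onI, clarify)
    fix P Y P' Y' assume PY: "P \<in> S" "Y \<in> T" "P' \<in> S" "Y' \<in> T" and eq: "P @ Y = P' @ Y'"
    have "P = P'" using unambiguous[OF PY(1,3,2,4) eq] .
    with eq show "P = P' \<and> Y = Y'" by simp
  qed
  have image: "(\<lambda>(P, Y). P @ Y) ` ?U = {X \<in> conc S T. length X = n}"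
  proof (intro equalityI subsetI)
    fix X assume "X \<in> {X \<in> conc S T. length X = n}"
    then obtain P Y where "P \<in> S" "Y \<in> T" "X = P @ Y" "length X = n"
      unfolding conc_def by auto
    then show "X \<in> (\<lambda>(P, Y). P @ Y) ` ?U"
      by (intro rev_image_eqI[of "(P, Y)"] UN_I[of "length P"]) auto
  qed (auto simp: conc_def)
  have "card {X \<in> conc S T. length X = n} = card ?U"
    using card_image[OF inj] unfolding image .
  also have "\<dots> = (\<Sum>i=0..n. card (?S i) * card (?T (n - i)))"
    using finite by (subst card_UN_disjoint) (auto simp: card_cartesian_product)
  finally show "lang_gf (conc S T) $ n = (lang_gf S * lang_gf T) $ n"
    by (simp add: fps_mult_nth lang_gf_nth)
qed

lemma lang_gf_Un:
  assumes "finite A" "S \<subseteq> lists A" "T \<subseteq> lists A" "S \<inter> T = {}"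
  shows "lang_gf (S \<union> T) = lang_gf S + lang_gf T"
proof (rule fps_ext)
  fix n
  have "{X \<in> S \<union> T. length X = n} = {X \<in> S. length X = n} \<union> {X \<in> T. length X = n}"
    by auto
  moreover have "card \<dots> = card {X \<in> S. length X = n} + card {X \<in> T. length X = n}"
    using assms by (intro card_Un_disjoint finite_lists_length_in) auto
  ultimately show "lang_gf (S \<union> T) $ n = (lang_gf S + lang_gf T) $ n"
    by (simp add: lang_gf_nth)
qed

lemma lang_gf_singleton: "lang_gf {xs} = fps_X ^ length xs"
  by (rule fps_ext) (simp add: lang_gf_nth Collect_conv_if)

lemma lang_gf_insert_Nil:
  assumes "finite A" "S \<subseteq> lists A" "[] \<notin> S"
  shows "lang_gf (insert [] S) = 1 + lang_gf S"
  using lang_gf_Un[OF assms(1), of "{[]}" S] assms lang_gf_singleton[of "[]"] by simp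

lemma lang_gf_insert_Nil_conc:
  assumes "finite A" "S \<subseteq> lists A" "T \<subseteq> lists A" "[] \<notin> conc S T"
    and unambiguous: "\<And>P P' Y Y'. P \<in> S \<Longrightarrow> P' \<in> S \<Longrightarrow> Y \<in> T \<Longrightarrow> Y' \<in> T \<Longrightarrow>
      P @ Y = P' @ Y' \<Longrightarrow> P = P'"
  shows "lang_gf (insert [] (conc S T)) = 1 + lang_gf S * lang_gf T"
proof -
  have "conc S T \<subseteq> lists A" using assms(2,3) by (fastforce simp: conc_def)
  then show ?thesis
    using lang_gf_insert_Nil[OF assms(1) _ assms(4)] lang_gf_conc[OF assms(1-3) unambiguous] by simp
qed

section \<open>Factorisation of words at occurrences\<close>

lemma suffix_tl_append_of_suffix: "suffix w P \<Longrightarrow> suffix (tl w @ Y) (P @ Y)"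
  using suffix_order.trans[OF suffix_tl] by simp

lemma occs_split_at_occ:
  assumes "w \<noteq> []" "j \<in> occs w X"
  defines "P \<equiv> take (j + length w) X" and "Y \<equiv> drop (j + length w) X"
  shows "X = P @ Y" and "suffix w P" and "occs w P = {i \<in> occs w X. i \<le> j}"
    and "(\<lambda>i. i + Suc j) ` occs w (tl w @ Y) = {i \<in> occs w X. j < i}"
proof -
  show X: "X = P @ Y" by (simp add: P_def Y_def)
  have "P = take j X @ take (length w) (drop j X)" by (simp add: P_def take_add)
  then show P: "suffix w P" using assms(2) by (simp add: occs_def suffix_def)
  show occs_P: "occs w P = {i \<in> occs w X. i \<le> j}"
    unfolding P_def using occs_take[of _ w "j + length w" X] by auto
  have "length P = j + length w" using occs_bound[OF assms(2)] by (simp add: P_def)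
  then have "occs w X = occs w P \<union> (\<lambda>i. i + Suc j) ` occs w (tl w @ Y)"
    using occs_append_of_suffix[OF P assms(1), of Y] X by simp
  moreover have "j < i + Suc j" for i by simp
  ultimately show "(\<lambda>i. i + Suc j) ` occs w (tl w @ Y) = {i \<in> occs w X. j < i}"
    using occs_P not_less by blast
qed

definition words_occ :: "nat \<Rightarrow> nat list \<Rightarrow> nat \<Rightarrow> nat list set" where
  "words_occ b w k = {X \<in> lists {..<b}. occ w X = k}"

definition words_occ_end :: "nat \<Rightarrow> nat list \<Rightarrow> nat \<Rightarrow> nat list set" where
  "words_occ_end b w k = {X \<in> words_occ b w k. suffix w X}"

definition single_occ_start :: "nat \<Rightarrow> nat list \<Rightarrow> nat list set" where
  "single_occ_start b w = {X \<in> words_occ b w 1. prefix w X}"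

definition avoiding :: "nat \<Rightarrow> nat list \<Rightarrow> nat list \<Rightarrow> nat list \<Rightarrow> nat list set" where
  "avoiding b w x y = {X \<in> words_occ b w 0. prefix x X \<and> suffix y X}"

text \<open>Appending Y to a word ending with w adds exactly the occurrences of w in tl w @ Y
  (lemma occ_append_of_suffix); the continuations Y are classified accordingly.\<close>

definition free_continuations :: "nat \<Rightarrow> nat list \<Rightarrow> nat list set" where
  "free_continuations b w = {Y \<in> lists {..<b}. occ w (tl w @ Y) = 0}"

definition next_occ_continuations :: "nat \<Rightarrow> nat list \<Rightarrow> nat list set" where
  "next_occ_continuations b w = {Y \<in> lists {..<b}. occ w (tl w @ Y) = 1 \<and> suffix w (tl w @ Y)}"

definition letters :: "nat \<Rightarrow> nat list set" where
  "letters b = {[c] | c. c < b}"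

lemma Zk_eq_lang_gf: "Zk b w k = lang_gf (words_occ b w k)"
  unfolding Zk_def lang_gf_def words_occ_def strings_def
  by (rule arg_cong[where f = Abs_fps]) (auto intro!: ext arg_cong[where f = "\<lambda>A. int (card A)"])

lemma Z0_eq_lang_gf: "Z0 b w x y = lang_gf (avoiding b w x y)"
  unfolding Z0_def lang_gf_def avoiding_def words_occ_def strings_def
  by (rule arg_cong[where f = Abs_fps]) (auto intro!: ext arg_cong[where f = "\<lambda>A. int (card A)"])

lemma languages_in_lists:
  "words_occ b w k \<subseteq> lists {..<b}" "words_occ_end b w k \<subseteq> lists {..<b}"
  "single_occ_start b w \<subseteq> lists {..<b}" "avoiding b w x y \<subseteq> lists {..<b}"
  "free_continuations b w \<subseteq> lists {..<b}" "next_occ_continuations b w \<subseteq> lists {..<b}"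
  "letters b \<subseteq> lists {..<b}"
  by (auto simp: words_occ_end_def single_occ_start_def avoiding_def words_occ_def
      free_continuations_def next_occ_continuations_def letters_def)

locale pattern =
  fixes b :: nat and w :: "nat list"
  assumes w_ne: "w \<noteq> []" and w_letters: "set w \<subseteq> {..<b}"
begin

lemma tl_w_in_lists: "tl w \<in> lists {..<b}"
  using w_letters by (cases w) auto

lemma hd_w_less: "hd w < b"
  using w_letters w_ne by (cases w) auto

lemma last_w_less: "last w < b"
  using w_letters w_ne last_in_set by blast

lemma words_occ_eq_conc:
  assumes "1 \<le> k"
  shows "words_occ b w k = conc (words_occ_end b w k) (free_continuations b w)"
proof (intro equalityI subsetI)
  fix X assume "X \<in> conc (words_occ_end b w k) (free_continuations b w)"
  then show "X \<in> words_occ b w k"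
    using occ_append_of_suffix[OF _ w_ne]
    by (auto simp: conc_def words_occ_end_def words_occ_def free_continuations_def)
next
  fix X assume X: "X \<in> words_occ b w k"
  then have "occs w X \<noteq> {}" using assms by (auto simp: words_occ_def occ_eq_card_occs)
  define j where "j = Max (occs w X)"
  have j: "j \<in> occs w X" and later: "{i \<in> occs w X. j < i} = {}" and earlier: "{i \<in> occs w X. i \<le> j} = occs w X"
    using \<open>occs w X \<noteq> {}\<close> by (auto simp: j_def)
  define P Y where "P = take (j + length w) X" and "Y = drop (j + length w) X"
  note split = occs_split_at_occ[OF w_ne j, folded P_def Y_def]
  have "occ w (tl w @ Y) = 0" and "occ w P = k"
    using split(3,4) later earlier X by (simp_all add: occ_eq_card_occs words_occ_def)
  then have "P \<in> words_occ_end b w k" "Y \<in> free_continuations b w"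
    using split(1,2) X
    by (auto simp: words_occ_end_def words_occ_def free_continuations_def)
  then show "X \<in> conc (words_occ_end b w k) (free_continuations b w)"
    by (subst split(1)) (rule append_in_conc)
qed

lemma conc_next_occ_continuations_subset:
  "conc (words_occ_end b w k) (next_occ_continuations b w) \<subseteq> words_occ_end b w (Suc k)"
proof
  fix X assume "X \<in> conc (words_occ_end b w k) (next_occ_continuations b w)"
  then obtain P Y where P: "P \<in> words_occ_end b w k" and Y: "Y \<in> next_occ_continuations b w"
    and X: "X = P @ Y" by (auto simp: conc_def)
  have "suffix w X"
    using suffix_order.trans suffix_tl_append_of_suffix P Y X
    by (fastforce simp: words_occ_end_def next_occ_continuations_def)
  then show "X \<in> words_occ_end b w (Suc k)"
    using occ_append_of_suffix[OF _ w_ne, of P Y] P Y X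
    by (auto simp: words_occ_end_def words_occ_def next_occ_continuations_def)
qed

lemma words_occ_end_Suc_subset_conc:
  assumes "1 \<le> k"
  shows "words_occ_end b w (Suc k) \<subseteq> conc (words_occ_end b w k) (next_occ_continuations b w)"
proof
  fix X assume X: "X \<in> words_occ_end b w (Suc k)"
  define L where "L = length X - length w"
  have "suffix w X" using X by (simp add: words_occ_end_def)
  then have L: "L \<in> occs w X"
    using last_start_in_occs_iff[OF suffix_length_le[OF \<open>suffix w X\<close>]] by (simp add: L_def)
  have card: "card (occs w X - {L}) = k"
    using X card_Diff_singleton[OF L] by (simp add: words_occ_end_def words_occ_def occ_eq_card_occs)
  then have "occs w X - {L} \<noteq> {}" using assms by (metis card.empty not_one_le_zero)
  define j where "j = Max (occs w X - {L})"
  have j: "j \<in> occs w X" "j \<noteq> L" and below_j: "\<And>i. i \<in> occs w X - {L} \<Longrightarrow> i \<le> j"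
    using \<open>occs w X - {L} \<noteq> {}\<close> Max_in[of "occs w X - {L}"] by (auto simp: j_def)
  have "j < L" using j occs_bound[OF j(1)] by (simp add: L_def)
  then have later: "{i \<in> occs w X. j < i} = {L}"
    and earlier: "{i \<in> occs w X. i \<le> j} = occs w X - {L}"
    using L below_j j by fastforce+
  define P Y where "P = take (j + length w) X" and "Y = drop (j + length w) X"
  note split = occs_split_at_occ[OF w_ne j(1), folded P_def Y_def]
  have "length P = j + length w" using occs_bound[OF j(1)] by (simp add: P_def)
  then have "Y \<noteq> []" using \<open>j < L\<close> split(1) by (auto simp: L_def)
  have "occ w P = k"
    using split(3) earlier card by (simp add: occ_eq_card_occs)
  moreover have "occ w (tl w @ Y) = 1"
    using split(4) later card_image[of "\<lambda>i. i + Suc j" "occs w (tl w @ Y)"]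
    by (simp add: occ_eq_card_occs inj_on_def)
  moreover have "suffix w (tl w @ Y)"
  proof (rule suffix_length_suffix)
    show "suffix w X" "suffix (tl w @ Y) X"
      using X split(1,2) suffix_tl_append_of_suffix by (auto simp: words_occ_end_def)
    show "length w \<le> length (tl w @ Y)"
      using \<open>Y \<noteq> []\<close> by (cases Y) auto
  qed
  ultimately have "P \<in> words_occ_end b w k" "Y \<in> next_occ_continuations b w"
    using split(1,2) X
    by (auto simp: words_occ_end_def words_occ_def next_occ_continuations_def)
  then show "X \<in> conc (words_occ_end b w k) (next_occ_continuations b w)"
    by (subst split(1)) (rule append_in_conc)
qed

lemma words_occ_end_Suc_eq_conc:
  assumes "1 \<le> k"
  shows "words_occ_end b w (Suc k) = conc (words_occ_end b w k) (next_occ_continuations b w)"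
  using words_occ_end_Suc_subset_conc[OF assms] conc_next_occ_continuations_subset by (rule subset_antisym)

lemma conc_tl_free_continuations:
  "conc {tl w} (free_continuations b w) = avoiding b w (tl w) []"
proof (intro equalityI subsetI)
  fix X assume "X \<in> avoiding b w (tl w) []"
  then obtain Y where "X = tl w @ Y" "Y \<in> free_continuations b w"
    by (auto simp: avoiding_def words_occ_def free_continuations_def prefix_def in_lists_conv_set)
  then show "X \<in> conc {tl w} (free_continuations b w)" by (simp add: conc_singleton)
qed (use tl_w_in_lists in \<open>auto simp: conc_singleton free_continuations_def avoiding_def words_occ_def in_lists_conv_set\<close>)

lemma conc_tl_next_occ_continuations:
  "conc {tl w} (next_occ_continuations b w) = {X \<in> words_occ_end b w 1. prefix (tl w) X}"
proof (intro equalityI subsetI)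
  fix X assume "X \<in> {X \<in> words_occ_end b w 1. prefix (tl w) X}"
  then obtain Y where "X = tl w @ Y" "Y \<in> next_occ_continuations b w"
    by (auto simp: words_occ_end_def words_occ_def next_occ_continuations_def prefix_def in_lists_conv_set)
  then show "X \<in> conc {tl w} (next_occ_continuations b w)" by (simp add: conc_singleton)
qed (use tl_w_in_lists in \<open>auto simp: conc_singleton next_occ_continuations_def words_occ_end_def words_occ_def in_lists_conv_set\<close>)

lemma conc_avoiding_last:
  "conc (avoiding b w (tl w) (butlast w)) {[last w]} = {X \<in> words_occ_end b w 1. prefix (tl w) X}"
proof (intro equalityI subsetI)
  fix X assume "X \<in> conc (avoiding b w (tl w) (butlast w)) {[last w]}"
  then obtain Z where Z: "Z \<in> avoiding b w (tl w) (butlast w)" and X: "X = Z @ [last w]"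
    by (auto simp: conc_def)
  have "suffix w X"
    using Z X append_butlast_last_id[OF w_ne] same_suffix_suffix[of "butlast w" "[last w]" Z]
    by (simp add: avoiding_def del: suffix_snoc)
  then show "X \<in> {X \<in> words_occ_end b w 1. prefix (tl w) X}"
    using Z X occ_snoc_of_occ_0[of w Z "last w"] last_w_less
    by (auto simp: avoiding_def words_occ_end_def words_occ_def simp del: suffix_snoc)
next
  fix X assume X: "X \<in> {X \<in> words_occ_end b w 1. prefix (tl w) X}"
  then have "suffix w X" "prefix (tl w) X" "X \<in> lists {..<b}" "occ w X = 1"
    by (auto simp: words_occ_end_def words_occ_def)
  obtain A where A: "X = A @ w" using \<open>suffix w X\<close> by (auto simp: suffix_def)
  have X_snoc: "X = butlast X @ [last w]" and butlast: "butlast X = A @ butlast w"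
    using A w_ne by (simp_all add: butlast_append)
  have "occ w (butlast X) = 0"
    using occ_butlast_eq_0[OF w_ne] \<open>suffix w X\<close> \<open>occ w X = 1\<close> by blast
  moreover have "prefix (tl w) (butlast X)"
    by (rule prefix_length_prefix[OF \<open>prefix (tl w) X\<close> prefixeq_butlast]) (simp add: butlast)
  moreover have "butlast X \<in> lists {..<b}"
    using \<open>X \<in> lists {..<b}\<close> by (auto dest: in_set_butlastD)
  ultimately have "butlast X \<in> avoiding b w (tl w) (butlast w)"
    using butlast by (simp add: avoiding_def words_occ_def suffix_appendI)
  then show "X \<in> conc (avoiding b w (tl w) (butlast w)) {[last w]}"
    by (subst X_snoc) (rule append_in_conc[OF _ singletonI])
qed

lemma conc_words_occ_0_letters:
  "insert [] (conc (words_occ b w 0) (letters b)) = words_occ_end b w 1 \<union> words_occ b w 0"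
proof (intro equalityI subsetI)
  fix X assume "X \<in> insert [] (conc (words_occ b w 0) (letters b))"
  then consider "X = []" | Z c where "Z \<in> words_occ b w 0" "c < b" "X = Z @ [c]"
    by (auto simp: conc_def letters_def)
  then show "X \<in> words_occ_end b w 1 \<union> words_occ b w 0"
  proof cases
    case 1
    then show ?thesis using w_ne by (simp add: words_occ_def occ_eq_card_occs occs_Nil)
  next
    case 2
    then show ?thesis using occ_snoc_of_occ_0[of w Z c]
      by (auto simp: words_occ_end_def words_occ_def simp del: suffix_snoc split: if_splits)
  qed
next
  fix X assume X: "X \<in> words_occ_end b w 1 \<union> words_occ b w 0"
  show "X \<in> insert [] (conc (words_occ b w 0) (letters b))"
  proof (cases "X = []")
    case False
    have "occ w (butlast X) = 0"
      using X occ_butlast_eq_0[OF w_ne] by (auto simp: words_occ_end_def words_occ_def)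
    then have "butlast X \<in> words_occ b w 0" "[last X] \<in> letters b"
      using X False by (auto simp: words_occ_end_def words_occ_def letters_def in_set_butlastD)
    then show ?thesis
      using append_in_conc append_butlast_last_id[OF False] by (metis insertI2)
  qed simp
qed

lemma conc_letters_words_occ_0:
  "insert [] (conc (letters b) (words_occ b w 0)) = single_occ_start b w \<union> words_occ b w 0"
proof (intro equalityI subsetI)
  fix X assume "X \<in> insert [] (conc (letters b) (words_occ b w 0))"
  then consider "X = []" | Z c where "Z \<in> words_occ b w 0" "c < b" "X = c # Z"
    by (auto simp: conc_def letters_def)
  then show "X \<in> single_occ_start b w \<union> words_occ b w 0"
  proof cases
    case 1
    then show ?thesis using w_ne by (simp add: words_occ_def occ_eq_card_occs occs_Nil)
  next
    case 2
    then show ?thesis using occ_Cons_of_occ_0[OF w_ne, of Z c]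
      by (auto simp: single_occ_start_def words_occ_def split: if_splits)
  qed
next
  fix X assume X: "X \<in> single_occ_start b w \<union> words_occ b w 0"
  show "X \<in> insert [] (conc (letters b) (words_occ b w 0))"
  proof (cases X)
    case (Cons c Z)
    have "occ w Z = 0"
      using X occ_tl_eq_0[OF w_ne, of X] Cons by (auto simp: single_occ_start_def words_occ_def)
    then have "Z \<in> words_occ b w 0" "[c] \<in> letters b"
      using X Cons by (auto simp: single_occ_start_def words_occ_def letters_def)
    then show ?thesis
      using append_in_conc[of "[c]" "letters b" Z] Cons by simp
  qed simp
qed

lemma single_occ_start_eq_conc:
  "single_occ_start b w = conc {[hd w]} (avoiding b w (tl w) [])"
proof (intro equalityI subsetI)
  fix X assume X: "X \<in> single_occ_start b w"
  then obtain R where R: "X = w @ R" by (auto simp: single_occ_start_def prefix_def)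
  then have X_Cons: "X = hd w # (tl w @ R)" using w_ne by simp
  have "occ w (tl w @ R) = 0"
    using occ_tl_eq_0[OF w_ne, of X] X X_Cons by (auto simp: single_occ_start_def words_occ_def)
  then have "tl w @ R \<in> avoiding b w (tl w) []"
    using X X_Cons by (auto simp: single_occ_start_def avoiding_def words_occ_def)
  then show "X \<in> conc {[hd w]} (avoiding b w (tl w) [])"
    using X_Cons by (simp add: conc_singleton)
next
  fix X assume "X \<in> conc {[hd w]} (avoiding b w (tl w) [])"
  then obtain Z where Z: "Z \<in> avoiding b w (tl w) []" and X: "X = hd w # Z"
    by (auto simp: conc_singleton)
  have "prefix w X"
    using Z X list.collapse[OF w_ne] Cons_prefix_Cons[of "hd w" "tl w" "hd w" Z]
    by (simp add: avoiding_def)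
  then show "X \<in> single_occ_start b w"
    using Z X occ_Cons_of_occ_0[OF w_ne, of Z "hd w"] hd_w_less
    by (auto simp: single_occ_start_def avoiding_def words_occ_def)
qed

end

section \<open>The generating function identities\<close>

lemma fps_to_fls_fps_X_power_mult:
  fixes f :: "'a::comm_ring_1 fps"
  shows "fps_to_fls (fps_X ^ n * f) = fls_X_intpow (int n) * fps_to_fls f"
  by (simp add: fls_times_fps_to_fls fps_to_fls_power fls_X_power_conv_shift_1)

lemma fps_to_fls_fps_X_mult:
  fixes f :: "'a::comm_ring_1 fps"
  shows "fps_to_fls (fps_X * f) = fls_X_intpow 1 * fps_to_fls f"
  using fps_to_fls_fps_X_power_mult[of 1 f] by simp

lemma fps_to_fls_eq_X_intpow_mult:
  fixes f g :: "'a::comm_ring_1 fps"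
  assumes "fps_X ^ n * f = g"
  shows "fps_to_fls f = fls_X_intpow (- int n) * fps_to_fls g"
  unfolding assms[symmetric] fps_to_fls_fps_X_power_mult
  by (simp only: mult.assoc[symmetric] fls_X_intpow_times_fls_X_intpow) simp

context pattern
begin

lemma words_occ_end_unambiguous:
  "P \<in> words_occ_end b w k \<Longrightarrow> P' \<in> words_occ_end b w k \<Longrightarrow> P @ Y = P' @ Y' \<Longrightarrow> P = P'"
  using occ_suffix_factor_unique[OF w_ne] by (auto simp: words_occ_end_def words_occ_def)

lemma lang_gf_words_occ:
  assumes "1 \<le> k"
  shows "lang_gf (words_occ b w k) = lang_gf (words_occ_end b w k) * lang_gf (free_continuations b w)"
  unfolding words_occ_eq_conc[OF assms]
  by (rule lang_gf_conc[of "{..<b}"]) (auto simp: languages_in_lists words_occ_end_unambiguous)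

lemma lang_gf_words_occ_end:
  "lang_gf (words_occ_end b w (Suc m)) =
    lang_gf (words_occ_end b w 1) * lang_gf (next_occ_continuations b w) ^ m"
proof (induction m)
  case (Suc m)
  have "lang_gf (words_occ_end b w (Suc (Suc m))) =
      lang_gf (words_occ_end b w (Suc m)) * lang_gf (next_occ_continuations b w)"
    unfolding words_occ_end_Suc_eq_conc[of "Suc m", simplified]
    by (rule lang_gf_conc[of "{..<b}"]) (auto simp: languages_in_lists words_occ_end_unambiguous)
  with Suc.IH show ?case by (simp add: mult_ac)
qed simp

lemma lang_gf_free_continuations:
  "fps_X ^ (length w - 1) * lang_gf (free_continuations b w) = Z0 b w (tl w) []"
  using lang_gf_conc[of "{..<b}" "{tl w}" "free_continuations b w"] tl_w_in_lists
  by (simp add: conc_tl_free_continuations Z0_eq_lang_gf lang_gf_singleton languages_in_lists)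

lemma lang_gf_next_occ_continuations:
  "fps_X ^ (length w - 1) * lang_gf (next_occ_continuations b w) = fps_X * Z0 b w (tl w) (butlast w)"
proof -
  have "fps_X ^ (length w - 1) * lang_gf (next_occ_continuations b w) =
      lang_gf {X \<in> words_occ_end b w 1. prefix (tl w) X}"
    using lang_gf_conc[of "{..<b}" "{tl w}" "next_occ_continuations b w"] tl_w_in_lists
    by (simp add: conc_tl_next_occ_continuations lang_gf_singleton languages_in_lists)
  also have "\<dots> = Z0 b w (tl w) (butlast w) * fps_X"
    using lang_gf_conc[of "{..<b}" "avoiding b w (tl w) (butlast w)" "{[last w]}"] last_w_less
    by (simp add: conc_avoiding_last Z0_eq_lang_gf lang_gf_singleton languages_in_lists)
  finally show ?thesis by (simp add: mult.commute)
qed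

text \<open>Appending a letter to a w-free word gives a w-free word or one containing w only at its
  end; prepending a letter gives a w-free word or one containing w only at its start. Both maps
  are injective, so the two kinds of words are equinumerous.\<close>
lemma lang_gf_words_occ_end_1: "lang_gf (words_occ_end b w 1) = fps_X * Z0 b w (tl w) []"
proof -
  let ?F = "words_occ b w 0" and ?L = "letters b"
  have "1 + lang_gf ?F * lang_gf ?L = lang_gf (insert [] (conc ?F ?L))"
    by (rule lang_gf_insert_Nil_conc[of "{..<b}", symmetric])
      (auto simp: languages_in_lists conc_def letters_def)
  also have "\<dots> = lang_gf (words_occ_end b w 1) + lang_gf ?F"
    unfolding conc_words_occ_0_letters
    by (rule lang_gf_Un[of "{..<b}"]) (auto simp: languages_in_lists words_occ_end_def words_occ_def)
  finally have "lang_gf (words_occ_end b w 1) = 1 + lang_gf ?L * lang_gf ?F - lang_gf ?F"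
    by (simp add: mult.commute)
  also have "1 + lang_gf ?L * lang_gf ?F = lang_gf (insert [] (conc ?L ?F))"
    by (rule lang_gf_insert_Nil_conc[of "{..<b}", symmetric])
      (auto simp: languages_in_lists conc_def letters_def)
  also have "\<dots> = lang_gf (single_occ_start b w) + lang_gf ?F"
    unfolding conc_letters_words_occ_0
    by (rule lang_gf_Un[of "{..<b}"]) (auto simp: languages_in_lists single_occ_start_def words_occ_def)
  also have "lang_gf (single_occ_start b w) = fps_X * Z0 b w (tl w) []"
    using lang_gf_conc[of "{..<b}" "{[hd w]}" "avoiding b w (tl w) []"] hd_w_less
    by (simp add: single_occ_start_eq_conc Z0_eq_lang_gf lang_gf_singleton languages_in_lists)
  finally show ?thesis by simp
qed

lemma fps_to_fls_lang_gf_free_continuations: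
  "fps_to_fls (lang_gf (free_continuations b w)) =
    fls_X_intpow (1 - int (length w)) * fps_to_fls (Z0 b w (tl w) [])"
proof -
  have "- int (length w - 1) = 1 - int (length w)" using w_ne by (simp add: of_nat_diff Suc_leI)
  then show ?thesis
    using fps_to_fls_eq_X_intpow_mult[OF lang_gf_free_continuations] by simp
qed

lemma fps_to_fls_lang_gf_next_occ_continuations:
  "fps_to_fls (lang_gf (next_occ_continuations b w)) =
    fls_X_intpow (2 - int (length w)) * fps_to_fls (Z0 b w (tl w) (butlast w))"
proof -
  have "fps_to_fls (lang_gf (next_occ_continuations b w)) =
      fls_X_intpow (- int (length w - 1)) * (fls_X_intpow 1 * fps_to_fls (Z0 b w (tl w) (butlast w)))"
    using fps_to_fls_eq_X_intpow_mult[OF lang_gf_next_occ_continuations]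
    unfolding fps_to_fls_fps_X_mult .
  also have "\<dots> = fls_X_intpow (- int (length w - 1) + 1) * fps_to_fls (Z0 b w (tl w) (butlast w))"
    by (simp only: mult.assoc[symmetric] fls_X_intpow_times_fls_X_intpow)
  also have "- int (length w - 1) + 1 = 2 - int (length w)"
    using w_ne by (simp add: of_nat_diff Suc_leI)
  finally show ?thesis .
qed

end

theorem lemma7:
  fixes b k :: nat and w :: "nat list"
  assumes "b \<ge> 2" and "w \<noteq> []" and "set w \<subseteq> {..<b}" and "k \<ge> 1"
  shows "fps_to_fls (Zk b w k) =
    fls_X_intpow (2 - int (length w)) *
    (fls_X_intpow (2 - int (length w)) * fps_to_fls (Z0 b w (tl w) (butlast w))) ^ (k - 1) *
    (fps_to_fls (Z0 b w (tl w) [])) ^ 2"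
proof -
  interpret pattern b w using assms(2,3) by unfold_locales
  obtain m where k: "k = Suc m" using assms(4) by (cases k) auto
  let ?A = "fps_to_fls (Z0 b w (tl w) [])"
    and ?M = "fls_X_intpow (2 - int (length w)) * fps_to_fls (Z0 b w (tl w) (butlast w))"
  have "fps_to_fls (Zk b w k) = fps_to_fls (lang_gf (words_occ_end b w 1)) *
      fps_to_fls (lang_gf (next_occ_continuations b w)) ^ m * fps_to_fls (lang_gf (free_continuations b w))"
    unfolding k Zk_eq_lang_gf lang_gf_words_occ[of "Suc m", simplified] lang_gf_words_occ_end
    by (simp only: fls_times_fps_to_fls fps_to_fls_power)
  also have "\<dots> = fls_X_intpow 1 * ?A * ?M ^ m * (fls_X_intpow (1 - int (length w)) * ?A)"
    unfolding lang_gf_words_occ_end_1 fps_to_fls_fps_X_mult fps_to_fls_lang_gf_next_occ_continuations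
      fps_to_fls_lang_gf_free_continuations ..
  also have "\<dots> = (fls_X_intpow 1 * fls_X_intpow (1 - int (length w))) * ?M ^ m * ?A ^ 2"
    by (simp only: power2_eq_square ac_simps)
  also have "\<dots> = fls_X_intpow (2 - int (length w)) * ?M ^ m * ?A ^ 2"
    by (simp only: fls_X_intpow_times_fls_X_intpow) simp
  finally show ?thesis unfolding k diff_Suc_1 .
qed

end
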